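(* Let $H$ be a separable infinite-dimensional complex Hilbert space and let $X$ be a closed subspace of $H$ whose dimension and codimension are both infinite. Then there is a closed subspace $Q$ of $H$ of infinite dimension and infinite codimension such that $Q\cap X^{\perp}=0$ and $Q^{\perp}\cap X^{\perp}=0$. *)

theory Defs
  imports Complex_Main "HOL-Library.Countable_Set"
begin

text \<open>An abstract complex Hilbert space: the carrier is the whole type 'a
  (with its additive group structure), sm is complex scalar multiplication
  and ip the inner product (linear in the first argument).\<close>

definition hnorm :: "('a \<Rightarrow> 'a \<Rightarrow> complex) \<Rightarrow> 'a \<Rightarrow> real" where
  "hnorm ip x = sqrt (Re (ip x x))"

definition complex_inner_product_space ::
  "(complex \<Rightarrow> 'a::ab_group_add \<Rightarrow> 'a) \<Rightarrow> ('a \<Rightarrow> 'a \<Rightarrow> complex) \<Rightarrow> bool" where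
  "complex_inner_product_space sm ip \<longleftrightarrow>
     (\<forall>a x y. sm a (x + y) = sm a x + sm a y) \<and>
     (\<forall>a b x. sm (a + b) x = sm a x + sm b x) \<and>
     (\<forall>a b x. sm a (sm b x) = sm (a * b) x) \<and>
     (\<forall>x. sm 1 x = x) \<and>
     (\<forall>x y z. ip (x + y) z = ip x z + ip y z) \<and>
     (\<forall>a x y. ip (sm a x) y = a * ip x y) \<and>
     (\<forall>x y. ip y x = cnj (ip x y)) \<and>
     (\<forall>x. Re (ip x x) \<ge> 0) \<and>
     (\<forall>x. ip x x = 0 \<longrightarrow> x = 0)"

definition h_cauchy :: "('a::ab_group_add \<Rightarrow> 'a \<Rightarrow> complex) \<Rightarrow> (nat \<Rightarrow> 'a) \<Rightarrow> bool" where
  "h_cauchy ip f \<longleftrightarrow> (\<forall>e>0. \<exists>N. \<forall>m\<ge>N. \<forall>n\<ge>N. hnorm ip (f m - f n) < e)"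

definition h_tendsto :: "('a::ab_group_add \<Rightarrow> 'a \<Rightarrow> complex) \<Rightarrow> (nat \<Rightarrow> 'a) \<Rightarrow> 'a \<Rightarrow> bool" where
  "h_tendsto ip f l \<longleftrightarrow> (\<forall>e>0. \<exists>N. \<forall>n\<ge>N. hnorm ip (f n - l) < e)"

definition complex_hilbert_space ::
  "(complex \<Rightarrow> 'a::ab_group_add \<Rightarrow> 'a) \<Rightarrow> ('a \<Rightarrow> 'a \<Rightarrow> complex) \<Rightarrow> bool" where
  "complex_hilbert_space sm ip \<longleftrightarrow> complex_inner_product_space sm ip \<and>
     (\<forall>f. h_cauchy ip f \<longrightarrow> (\<exists>l. h_tendsto ip f l))"

definition h_separable :: "('a::ab_group_add \<Rightarrow> 'a \<Rightarrow> complex) \<Rightarrow> bool" where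
  "h_separable ip \<longleftrightarrow> (\<exists>D. countable D \<and> (\<forall>x. \<forall>e>0. \<exists>d\<in>D. hnorm ip (x - d) < e))"

definition cspan :: "(complex \<Rightarrow> 'a::ab_group_add \<Rightarrow> 'a) \<Rightarrow> 'a set \<Rightarrow> 'a set" where
  "cspan sm S = {x. \<exists>F c. finite F \<and> F \<subseteq> S \<and> x = (\<Sum>v\<in>F. sm (c v) v)}"

definition h_subspace :: "(complex \<Rightarrow> 'a::ab_group_add \<Rightarrow> 'a) \<Rightarrow> 'a set \<Rightarrow> bool" where
  "h_subspace sm X \<longleftrightarrow> 0 \<in> X \<and> (\<forall>x\<in>X. \<forall>y\<in>X. x + y \<in> X) \<and> (\<forall>a. \<forall>x\<in>X. sm a x \<in> X)"

definition h_closed :: "('a::ab_group_add \<Rightarrow> 'a \<Rightarrow> complex) \<Rightarrow> 'a set \<Rightarrow> bool" where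
  "h_closed ip X \<longleftrightarrow> (\<forall>f l. (\<forall>n. f n \<in> X) \<and> h_tendsto ip f l \<longrightarrow> l \<in> X)"

definition closed_subspace ::
  "(complex \<Rightarrow> 'a::ab_group_add \<Rightarrow> 'a) \<Rightarrow> ('a \<Rightarrow> 'a \<Rightarrow> complex) \<Rightarrow> 'a set \<Rightarrow> bool" where
  "closed_subspace sm ip X \<longleftrightarrow> h_subspace sm X \<and> h_closed ip X"

definition infinite_dim :: "(complex \<Rightarrow> 'a::ab_group_add \<Rightarrow> 'a) \<Rightarrow> 'a set \<Rightarrow> bool" where
  "infinite_dim sm X \<longleftrightarrow> \<not> (\<exists>F. finite F \<and> X \<subseteq> cspan sm F)"

text \<open>Infinite codimension: the quotient of the whole space by X is infinite dimensional.\<close>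
definition infinite_codim :: "(complex \<Rightarrow> 'a::ab_group_add \<Rightarrow> 'a) \<Rightarrow> 'a set \<Rightarrow> bool" where
  "infinite_codim sm X \<longleftrightarrow> \<not> (\<exists>F. finite F \<and> UNIV \<subseteq> cspan sm (X \<union> F))"

definition orth_compl :: "('a \<Rightarrow> 'a \<Rightarrow> complex) \<Rightarrow> 'a set \<Rightarrow> 'a set" where
  "orth_compl ip X = {y. \<forall>x\<in>X. ip x y = 0}"

end

theory Submission
  imports Defs
begin

text \<open>Let \<open>Y = X\<^sup>\<bottom>\<close>. Gram--Schmidt applied to a dense sequence of Y yields an orthogonal
  sequence \<open>g\<^sub>n\<close> that is total in Y, and X contains an orthonormal sequence \<open>u\<^sub>n\<close>.
  Put \<open>e\<^sub>n = \<parallel>g\<^sub>n\<parallel> u\<^sub>2\<^sub>n\<close>: then e and g have the same Gram matrix and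
  \<open>e \<bottom> g\<close>, so \<open>e\<^sub>m - g\<^sub>m \<bottom> e\<^sub>n + g\<^sub>n\<close>. Take Q to be the orthogonal complement of all
  \<open>e\<^sub>n - g\<^sub>n\<close> and all \<open>u\<^sub>4\<^sub>k\<^sub>+\<^sub>1\<close>. A vector of Y lying in Q is orthogonal to every
  \<open>e\<^sub>n - g\<^sub>n\<close>, hence to every \<open>g\<^sub>n\<close>, hence zero; a vector of Y orthogonal to Q is
  orthogonal to every \<open>e\<^sub>n + g\<^sub>n \<in> Q\<close>, hence zero. Finally the orthonormal vectors
  \<open>u\<^sub>4\<^sub>k\<^sub>+\<^sub>3 \<in> Q\<close> and \<open>u\<^sub>4\<^sub>k\<^sub>+\<^sub>1 \<bottom> Q\<close> make the dimension and the codimension of Q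
  infinite.\<close>

locale complex_inner_product =
  fixes sm :: "complex \<Rightarrow> 'a::ab_group_add \<Rightarrow> 'a"
    and ip :: "'a \<Rightarrow> 'a \<Rightarrow> complex"
  assumes complex_inner_product_space: "complex_inner_product_space sm ip"
begin

lemma scale_add_right: "sm a (x + y) = sm a x + sm a y"
  and scale_add_left: "sm (a + b) x = sm a x + sm b x"
  and scale_scale: "sm a (sm b x) = sm (a * b) x"
  and scale_one: "sm 1 x = x"
  and ip_add_left: "ip (x + y) z = ip x z + ip y z"
  and ip_scale_left: "ip (sm a x) y = a * ip x y"
  and ip_commute: "ip y x = cnj (ip x y)"
  and ip_self_nonneg: "Re (ip x x) \<ge> 0"
  and ip_self_eq_0: "ip x x = 0 \<Longrightarrow> x = 0"
  using complex_inner_product_space unfolding complex_inner_product_space_def by blast+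

sublocale vs: vector_space sm
  by unfold_locales (auto simp: scale_add_right scale_add_left scale_scale scale_one)

lemma ip_add_right: "ip x (y + z) = ip x y + ip x z"
  by (metis ip_commute ip_add_left complex_cnj_add)

lemma ip_scale_right: "ip x (sm a y) = cnj a * ip x y"
  by (metis ip_commute ip_scale_left complex_cnj_mult)

lemma ip_zero_left [simp]: "ip 0 y = 0"
  using ip_add_left[of 0 0 y] by simp

lemma ip_zero_right [simp]: "ip y 0 = 0"
  using ip_add_right[of y 0 0] by simp

lemma ip_minus_left: "ip (- x) y = - ip x y"
  using ip_add_left[of "- x" x y] by (simp add: eq_neg_iff_add_eq_0)

lemma ip_minus_right: "ip y (- x) = - ip y x"
  using ip_add_right[of y "- x" x] by (simp add: eq_neg_iff_add_eq_0)

lemma ip_diff_left: "ip (x - y) z = ip x z - ip y z"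
  by (simp only: diff_conv_add_uminus ip_add_left ip_minus_left)

lemma ip_diff_right: "ip z (x - y) = ip z x - ip z y"
  by (simp only: diff_conv_add_uminus ip_add_right ip_minus_right)

lemma ip_sum_left: "ip (sum f A) y = (\<Sum>i\<in>A. ip (f i) y)"
  by (induct A rule: infinite_finite_induct) (auto simp: ip_add_left)

lemma ip_eq_0_commute: "ip a b = 0 \<longleftrightarrow> ip b a = 0"
  using ip_commute[of a b] by auto

lemma hnorm_nonneg: "hnorm ip x \<ge> 0"
  unfolding hnorm_def using ip_self_nonneg[of x] by simp

lemma hnorm_square: "(hnorm ip x)\<^sup>2 = Re (ip x x)"
  unfolding hnorm_def using ip_self_nonneg[of x] by simp

lemma ip_self_eq_hnorm_square: "ip x x = complex_of_real ((hnorm ip x)\<^sup>2)"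
proof -
  have "Im (ip x x) = 0"
    using arg_cong[OF ip_commute[of x x], of Im] by simp
  then show ?thesis by (simp add: hnorm_square complex_eq_iff)
qed

lemma hnorm_eq_0_iff: "hnorm ip x = 0 \<longleftrightarrow> x = 0"
  using ip_self_eq_hnorm_square[of x] ip_self_eq_0[of x] by auto

lemma hnorm_minus_commute: "hnorm ip (x - y) = hnorm ip (y - x)"
  unfolding hnorm_def by (simp add: ip_diff_left ip_diff_right algebra_simps)

lemma cauchy_schwarz: "cmod (ip x y) \<le> hnorm ip x * hnorm ip y"
proof (cases "y = 0")
  case True
  then show ?thesis by (simp add: hnorm_nonneg)
next
  case False
  define a where "a = ip x y"
  define b where "b = (hnorm ip y)\<^sup>2"
  have yy: "ip y y = complex_of_real b" unfolding b_def by (rule ip_self_eq_hnorm_square)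
  have b: "b > 0" unfolding b_def using False hnorm_eq_0_iff hnorm_nonneg[of y] by simp
  define t where "t = a / complex_of_real b"
  have yx: "ip y x = cnj a" unfolding a_def by (rule ip_commute)
  \<comment> \<open>x minus its projection onto y has nonnegative square norm\<close>
  have "ip (x - sm t y) (x - sm t y) = ip x x - complex_of_real ((cmod a)\<^sup>2 / b)"
    using b by (simp add: ip_diff_left ip_diff_right ip_scale_left ip_scale_right yy yx
        a_def[symmetric] t_def complex_norm_square[unfolded of_real_power] field_simps)
  then have "(cmod a)\<^sup>2 / b \<le> Re (ip x x)"
    using ip_self_nonneg[of "x - sm t y"] by simp
  then have "(cmod a)\<^sup>2 \<le> ((hnorm ip x) * (hnorm ip y))\<^sup>2"
    using b by (simp add: hnorm_square b_def field_simps)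
  then show ?thesis
    unfolding a_def by (rule power2_le_imp_le) (simp add: hnorm_nonneg)
qed

lemma hnorm_triangle: "hnorm ip (x + y) \<le> hnorm ip x + hnorm ip y"
proof -
  have "Re (ip x y) \<le> hnorm ip x * hnorm ip y"
    using cauchy_schwarz[of x y] complex_Re_le_cmod[of "ip x y"] by linarith
  moreover have "Re (ip y x) = Re (ip x y)"
    using ip_commute[of x y] by simp
  ultimately have "(hnorm ip (x + y))\<^sup>2 \<le> (hnorm ip x + hnorm ip y)\<^sup>2"
    by (simp add: hnorm_square power2_sum ip_add_left ip_add_right)
  then show ?thesis
    by (rule power2_le_imp_le) (simp add: hnorm_nonneg)
qed

lemma cspan_eq_span: "cspan sm S = vs.span S"
  unfolding cspan_def vs.span_explicit by blast

lemma h_subspace_eq_subspace: "h_subspace sm = vs.subspace"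
  unfolding h_subspace_def [abs_def] vs.subspace_def [abs_def] by simp

lemma ip_in_orth_compl: "x \<in> X \<Longrightarrow> y \<in> orth_compl ip X \<Longrightarrow> ip x y = 0"
  unfolding orth_compl_def by blast

lemma subspace_orth_compl: "vs.subspace (orth_compl ip A)"
  unfolding vs.subspace_def orth_compl_def by (simp add: ip_add_right ip_scale_right)

lemma h_closed_orth_compl: "h_closed ip (orth_compl ip A)"
  unfolding h_closed_def
proof (intro allI impI)
  fix f l
  assume "(\<forall>n. f n \<in> orth_compl ip A) \<and> h_tendsto ip f l"
  then have f: "\<And>n a. a \<in> A \<Longrightarrow> ip a (f n) = 0" and lim: "h_tendsto ip f l"
    unfolding orth_compl_def by auto
  have "cmod (ip a l) \<le> e" if "a \<in> A" and "e > 0" for a e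
  proof -
    have "e / (hnorm ip a + 1) > 0" using \<open>e > 0\<close> hnorm_nonneg[of a] by simp
    then obtain n where n: "hnorm ip (f n - l) < e / (hnorm ip a + 1)"
      using lim unfolding h_tendsto_def by blast
    have "cmod (ip a l) = cmod (ip a (f n - l))"
      using f[OF \<open>a \<in> A\<close>] by (simp add: ip_diff_right)
    also have "\<dots> \<le> hnorm ip a * hnorm ip (f n - l)" by (rule cauchy_schwarz)
    also have "\<dots> \<le> (hnorm ip a + 1) * (e / (hnorm ip a + 1))"
      using n hnorm_nonneg[of a] hnorm_nonneg[of "f n - l"] by (intro mult_mono) auto
    also have "\<dots> = e" using hnorm_nonneg[of a] by simp
    finally show ?thesis .
  qed
  then have "\<And>a. a \<in> A \<Longrightarrow> cmod (ip a l) \<le> 0"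
    by (metis add_0 field_le_epsilon)
  then show "l \<in> orth_compl ip A" unfolding orth_compl_def by simp
qed

lemma closed_subspace_orth_compl: "closed_subspace sm ip (orth_compl ip A)"
  unfolding closed_subspace_def h_subspace_eq_subspace
  using subspace_orth_compl h_closed_orth_compl by blast

lemma orthogonal_to_approximating_seq_eq_0:
  assumes "\<And>n. ip (c n) y = 0" and "\<And>e. e > 0 \<Longrightarrow> \<exists>n. hnorm ip (y - c n) < e"
  shows "y = 0"
proof (rule ccontr)
  assume "y \<noteq> 0"
  then have y: "hnorm ip y > 0" using hnorm_eq_0_iff hnorm_nonneg[of y] by fastforce
  then obtain n where n: "hnorm ip (y - c n) < hnorm ip y" using assms(2) by blast
  have "(hnorm ip y)\<^sup>2 = cmod (ip (y - c n) y)"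
    using assms(1)[of n] by (simp add: ip_diff_left ip_self_eq_hnorm_square norm_power)
  also have "\<dots> \<le> hnorm ip (y - c n) * hnorm ip y" by (rule cauchy_schwarz)
  also have "\<dots> < (hnorm ip y)\<^sup>2" using n y by (simp add: power2_eq_square)
  finally show False by simp
qed

definition orthonormal_seq :: "(nat \<Rightarrow> 'a) \<Rightarrow> bool" where
  "orthonormal_seq w \<longleftrightarrow> (\<forall>m n. ip (w m) (w n) = (if m = n then 1 else 0))"

lemma orthonormal_seq_inj:
  assumes "orthonormal_seq w"
  shows "inj w"
proof (rule injI)
  fix m n
  assume "w m = w n"
  then have "ip (w m) (w n) = 1" using assms by (simp add: orthonormal_seq_def)
  then show "m = n" using assms by (simp add: orthonormal_seq_def split: if_splits)
qed

lemma orthonormal_seq_comp: "orthonormal_seq w \<Longrightarrow> inj f \<Longrightarrow> orthonormal_seq (w \<circ> f)"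
  unfolding orthonormal_seq_def inj_def by auto

lemma independent_orthonormal_seq_image:
  assumes w: "orthonormal_seq w" and "finite K"
  shows "vs.independent (w ` K)"
proof
  assume "vs.dependent (w ` K)"
  then obtain c v0 where v0: "v0 \<in> w ` K" "c v0 \<noteq> 0" and sum: "(\<Sum>v\<in>w ` K. sm (c v) v) = 0"
    using vs.dependent_finite \<open>finite K\<close> by blast
  have ip_image: "ip v v0 = (if v = v0 then 1 else 0)" if "v \<in> w ` K" for v
    using that v0(1) w orthonormal_seq_inj[OF w] unfolding orthonormal_seq_def inj_def by auto
  have "0 = ip (\<Sum>v\<in>w ` K. sm (c v) v) v0" using sum by simp
  also have "\<dots> = (\<Sum>v\<in>w ` K. c v * ip v v0)" by (simp add: ip_sum_left ip_scale_left)
  also have "\<dots> = (\<Sum>v\<in>w ` K. if v = v0 then c v0 else 0)"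
    by (rule sum.cong) (auto simp: ip_image)
  also have "\<dots> = c v0" using \<open>finite K\<close> v0(1) by simp
  finally show False using v0(2) by simp
qed

lemma card_le_if_orthonormal_seq_in_span:
  assumes w: "orthonormal_seq w" and "finite F" and "w ` {..<N} \<subseteq> vs.span F"
  shows "N \<le> card F"
proof -
  have "card (w ` {..<N}) \<le> card F"
    using vs.independent_span_bound independent_orthonormal_seq_image[OF w] assms(2,3)
    by (meson finite_lessThan)
  then show ?thesis
    using orthonormal_seq_inj[OF w] by (simp add: card_image inj_on_subset)
qed

text \<open>Projecting onto the first \<open>card F + 1\<close> vectors of w kills Z and maps the span of
  \<open>Z \<union> F\<close> into a space of dimension at most \<open>card F\<close>.\<close>

lemma orthonormal_seq_not_in_span:
  assumes w: "orthonormal_seq w" and Z: "\<And>z k. z \<in> Z \<Longrightarrow> ip z (w k) = 0" and "finite F"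
  shows "\<exists>k. w k \<notin> vs.span (Z \<union> F)"
proof (rule ccontr)
  assume "\<nexists>k. w k \<notin> vs.span (Z \<union> F)"
  then have in_span: "range w \<subseteq> vs.span (Z \<union> F)" by blast
  define N where "N = Suc (card F)"
  define P where "P v = (\<Sum>k<N. sm (ip v (w k)) (w k))" for v
  interpret P: module_hom sm sm P
    unfolding module_hom_iff P_def
    by (simp add: vs.module_axioms ip_add_left ip_scale_left scale_add_left sum.distrib
        vs.scale_sum_right)
  have P_Z: "P z = 0" if "z \<in> Z" for z
    unfolding P_def using Z that by simp
  have P_w: "P (w j) = w j" if "j < N" for j
  proof -
    have "P (w j) = (\<Sum>k<N. if k = j then w j else 0)"
      unfolding P_def by (rule sum.cong) (use w in \<open>auto simp: orthonormal_seq_def\<close>)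
    also have "\<dots> = w j" using that by simp
    finally show ?thesis .
  qed
  have "w ` {..<N} \<subseteq> P ` vs.span (Z \<union> F)"
  proof
    fix v
    assume "v \<in> w ` {..<N}"
    then obtain j where "j < N" and v: "v = w j" by blast
    then have "v = P (w j)" using P_w by simp
    moreover have "w j \<in> vs.span (Z \<union> F)" using in_span by blast
    ultimately show "v \<in> P ` vs.span (Z \<union> F)" by blast
  qed
  also have "\<dots> = vs.span (P ` (Z \<union> F))" by (rule P.span_image [symmetric])
  also have "\<dots> \<subseteq> vs.span (insert 0 (P ` F))" by (rule vs.span_mono) (auto simp: P_Z)
  finally have "w ` {..<N} \<subseteq> vs.span (P ` F)" by simp
  then have "N \<le> card (P ` F)"
    by (rule card_le_if_orthonormal_seq_in_span[OF w finite_imageI[OF \<open>finite F\<close>]])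
  also have "\<dots> \<le> card F" using \<open>finite F\<close> by (rule card_image_le)
  finally show False by (simp add: N_def)
qed

lemma infinite_dim_if_orthonormal_seq:
  assumes "orthonormal_seq w" and "\<And>k. w k \<in> Q"
  shows "infinite_dim sm Q"
  unfolding infinite_dim_def cspan_eq_span
proof
  assume "\<exists>F. finite F \<and> Q \<subseteq> vs.span F"
  then obtain F where "finite F" and "Q \<subseteq> vs.span F" by blast
  moreover obtain k where "w k \<notin> vs.span ({} \<union> F)"
    using orthonormal_seq_not_in_span[OF assms(1) _ \<open>finite F\<close>, of "{}"] by blast
  ultimately show False using assms(2) by auto
qed

lemma infinite_codim_if_orthogonal_to_orthonormal_seq:
  assumes "orthonormal_seq w" and "\<And>q k. q \<in> Q \<Longrightarrow> ip q (w k) = 0"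
  shows "infinite_codim sm Q"
  unfolding infinite_codim_def cspan_eq_span
proof
  assume "\<exists>F. finite F \<and> UNIV \<subseteq> vs.span (Q \<union> F)"
  then obtain F where "finite F" and "UNIV \<subseteq> vs.span (Q \<union> F)" by blast
  moreover obtain k where "w k \<notin> vs.span (Q \<union> F)"
    using orthonormal_seq_not_in_span[OF assms \<open>finite F\<close>] by blast
  ultimately show False by auto
qed

end

primrec greedy_set :: "(nat \<Rightarrow> 'b set \<Rightarrow> 'b) \<Rightarrow> nat \<Rightarrow> 'b set" where
  "greedy_set f 0 = {}"
| "greedy_set f (Suc n) = insert (f n (greedy_set f n)) (greedy_set f n)"

definition greedy_seq :: "(nat \<Rightarrow> 'b set \<Rightarrow> 'b) \<Rightarrow> nat \<Rightarrow> 'b" where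
  "greedy_seq f n = f n (greedy_set f n)"

lemma greedy_set_eq: "greedy_set f n = greedy_seq f ` {..<n}"
  by (induct n) (auto simp: greedy_seq_def lessThan_Suc)

context complex_inner_product
begin

definition orthogonal_set :: "'a set \<Rightarrow> bool" where
  "orthogonal_set G \<longleftrightarrow> (\<forall>a\<in>G. \<forall>b\<in>G. a \<noteq> b \<longrightarrow> ip a b = 0)"

lemma orthogonal_set_insert:
  assumes "orthogonal_set G" and "\<And>h. h \<in> G \<Longrightarrow> ip v h = 0"
  shows "orthogonal_set (insert v G)"
  using assms ip_eq_0_commute unfolding orthogonal_set_def by blast

text \<open>The Gram--Schmidt step; an element \<open>h = 0\<close> of G does no harm since then
  \<open>ip x h / ip h h = 0\<close>.\<close>

definition residual :: "'a set \<Rightarrow> 'a \<Rightarrow> 'a" where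
  "residual G x = x - (\<Sum>h\<in>G. sm (ip x h / ip h h) h)"

lemma ip_residual_orthogonal:
  assumes "finite G" and "orthogonal_set G" and "h \<in> G"
  shows "ip (residual G x) h = 0"
proof -
  have "ip (residual G x) h = ip x h - (\<Sum>k\<in>G. ip x k / ip k k * ip k h)"
    unfolding residual_def by (simp add: ip_diff_left ip_sum_left ip_scale_left)
  also have "(\<Sum>k\<in>G. ip x k / ip k k * ip k h) = (\<Sum>k\<in>G. if k = h then ip x h / ip h h * ip h h else 0)"
    by (rule sum.cong) (use assms(2,3) in \<open>auto simp: orthogonal_set_def\<close>)
  also have "\<dots> = ip x h"
    using assms(1,3) ip_self_eq_0[of h] by auto
  finally show ?thesis by simp
qed

lemma ip_residual_left:
  assumes "\<And>h. h \<in> G \<Longrightarrow> ip h y = 0"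
  shows "ip (residual G x) y = ip x y"
  unfolding residual_def using assms by (simp add: ip_diff_left ip_sum_left ip_scale_left)

lemma residual_in_subspace:
  assumes "vs.subspace Y" and "G \<subseteq> Y" and "x \<in> Y"
  shows "residual G x \<in> Y"
  unfolding residual_def using assms
  by (auto intro!: vs.subspace_diff vs.subspace_sum vs.subspace_scale)

lemma residual_eq_0_imp_in_span:
  assumes "residual G x = 0"
  shows "x \<in> vs.span G"
proof -
  have "x = (\<Sum>h\<in>G. sm (ip x h / ip h h) h)"
    using assms unfolding residual_def by simp
  also have "\<dots> \<in> vs.span G"
    by (rule vs.span_sum) (auto intro: vs.span_scale vs.span_base)
  finally show ?thesis .
qed

lemma greedy_set_orthogonal:
  assumes step: "\<And>n G. finite G \<Longrightarrow> G \<subseteq> Y \<Longrightarrow> orthogonal_set G \<Longrightarrow>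
      f n G \<in> Y \<and> (\<forall>h\<in>G. ip (f n G) h = 0)"
  shows "finite (greedy_set f n) \<and> greedy_set f n \<subseteq> Y \<and> orthogonal_set (greedy_set f n)"
proof (induct n)
  case 0
  then show ?case by (simp add: orthogonal_set_def)
next
  case (Suc n)
  then have "f n (greedy_set f n) \<in> Y" and "\<forall>h\<in>greedy_set f n. ip (f n (greedy_set f n)) h = 0"
    using step by blast+
  with Suc show ?case by (simp add: orthogonal_set_insert)
qed

lemma greedy_seq_orthogonal:
  assumes step: "\<And>n G. finite G \<Longrightarrow> G \<subseteq> Y \<Longrightarrow> orthogonal_set G \<Longrightarrow>
      f n G \<in> Y \<and> (\<forall>h\<in>G. ip (f n G) h = 0)"
  shows greedy_seq_in: "greedy_seq f n \<in> Y"
    and greedy_seq_orth: "m \<noteq> n \<Longrightarrow> ip (greedy_seq f m) (greedy_seq f n) = 0"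
proof -
  have *: "greedy_seq f n \<in> Y \<and> (\<forall>h\<in>greedy_set f n. ip (greedy_seq f n) h = 0)" for n
    unfolding greedy_seq_def using greedy_set_orthogonal[OF step, where n=n] by (intro step) auto
  then show "greedy_seq f n \<in> Y" by blast
  have less: "ip (greedy_seq f j) (greedy_seq f i) = 0" if "i < j" for i j
  proof -
    have "greedy_seq f i \<in> greedy_set f j" using that by (simp add: greedy_set_eq)
    then show ?thesis using *[of j] by blast
  qed
  assume "m \<noteq> n"
  then consider "m < n" | "n < m" by linarith
  then show "ip (greedy_seq f m) (greedy_seq f n) = 0"
  proof cases
    case 1
    then show ?thesis using less[of m n] ip_eq_0_commute by blast
  next
    case 2
    then show ?thesis by (rule less)
  qed
qed

definition gram_schmidt :: "(nat \<Rightarrow> 'a) \<Rightarrow> nat \<Rightarrow> 'a" where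
  "gram_schmidt c = greedy_seq (\<lambda>n G. residual G (c n))"

lemma gram_schmidt_orthogonal:
  assumes "vs.subspace Y" and "\<And>n. c n \<in> Y"
  shows gram_schmidt_in: "gram_schmidt c n \<in> Y"
    and gram_schmidt_orth: "m \<noteq> n \<Longrightarrow> ip (gram_schmidt c m) (gram_schmidt c n) = 0"
proof -
  have step: "residual G (c n) \<in> Y \<and> (\<forall>h\<in>G. ip (residual G (c n)) h = 0)"
    if "finite G" "G \<subseteq> Y" "orthogonal_set G" for n G
    using that assms residual_in_subspace ip_residual_orthogonal by blast
  show "gram_schmidt c n \<in> Y"
    unfolding gram_schmidt_def using step by (rule greedy_seq_in)
  show "m \<noteq> n \<Longrightarrow> ip (gram_schmidt c m) (gram_schmidt c n) = 0"
    unfolding gram_schmidt_def using step by (rule greedy_seq_orth)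
qed

lemma orthogonal_to_gram_schmidt:
  assumes "\<And>k. ip (gram_schmidt c k) y = 0"
  shows "ip (c n) y = 0"
proof -
  have "ip (residual (greedy_set (\<lambda>n G. residual G (c n)) n) (c n)) y = 0"
    using assms by (simp add: gram_schmidt_def greedy_seq_def)
  moreover have "\<And>h. h \<in> greedy_set (\<lambda>n G. residual G (c n)) n \<Longrightarrow> ip h y = 0"
    using assms by (auto simp: gram_schmidt_def greedy_set_eq)
  ultimately show ?thesis by (simp add: ip_residual_left)
qed

lemma exists_unit_orthogonal:
  assumes X: "vs.subspace X" "infinite_dim sm X"
    and G: "finite G" "G \<subseteq> X" "orthogonal_set G"
  shows "\<exists>v. v \<in> X \<and> ip v v = 1 \<and> (\<forall>h\<in>G. ip v h = 0)"
proof -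
  obtain x where "x \<in> X" and "x \<notin> vs.span G"
    using X(2) G(1) unfolding infinite_dim_def cspan_eq_span by blast
  define r where "r = residual G x"
  have "r \<noteq> 0" using \<open>x \<notin> vs.span G\<close> residual_eq_0_imp_in_span unfolding r_def by blast
  then have "hnorm ip r > 0" using hnorm_eq_0_iff hnorm_nonneg[of r] by fastforce
  define v where "v = sm (complex_of_real (1 / hnorm ip r)) r"
  have "ip v v = complex_of_real (1 / hnorm ip r) * complex_of_real (1 / hnorm ip r) * ip r r"
    unfolding v_def by (simp add: ip_scale_left ip_scale_right)
  also have "\<dots> = 1"
    using \<open>hnorm ip r > 0\<close> by (simp add: ip_self_eq_hnorm_square[of r] power2_eq_square)
  finally have "ip v v = 1" .
  moreover have "v \<in> X"
    unfolding v_def r_def using X(1) G(2) \<open>x \<in> X\<close>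
    by (intro vs.subspace_scale residual_in_subspace)
  moreover have "\<forall>h\<in>G. ip v h = 0"
    unfolding v_def r_def using G by (simp add: ip_scale_left ip_residual_orthogonal)
  ultimately show ?thesis by blast
qed

lemma exists_orthonormal_seq:
  assumes "vs.subspace X" and "infinite_dim sm X"
  shows "\<exists>u. (\<forall>n. u n \<in> X) \<and> orthonormal_seq u"
proof -
  define pick where "pick G = (SOME v. v \<in> X \<and> ip v v = 1 \<and> (\<forall>h\<in>G. ip v h = 0))" for G
  have pick: "pick G \<in> X \<and> ip (pick G) (pick G) = 1 \<and> (\<forall>h\<in>G. ip (pick G) h = 0)"
    if "finite G" "G \<subseteq> X" "orthogonal_set G" for G
    unfolding pick_def by (rule someI_ex) (rule exists_unit_orthogonal[OF assms that])
  define u where "u = greedy_seq (\<lambda>_. pick)"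
  have step: "\<And>n G. finite G \<Longrightarrow> G \<subseteq> X \<Longrightarrow> orthogonal_set G \<Longrightarrow>
      pick G \<in> X \<and> (\<forall>h\<in>G. ip (pick G) h = 0)"
    using pick by blast
  have "ip (u n) (u n) = 1" for n
    using pick greedy_set_orthogonal[OF step] unfolding u_def greedy_seq_def by blast
  then have "orthonormal_seq u"
    unfolding orthonormal_seq_def u_def using greedy_seq_orth[OF step] by simp
  moreover have "u n \<in> X" for n
    unfolding u_def using step by (rule greedy_seq_in)
  ultimately show ?thesis by blast
qed

lemma exists_dense_seq:
  assumes "h_separable ip" and "Y \<noteq> {}"
  shows "\<exists>c :: nat \<Rightarrow> 'a. (\<forall>n. c n \<in> Y) \<and> (\<forall>y\<in>Y. \<forall>e>0. \<exists>n. hnorm ip (y - c n) < e)"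
proof -
  obtain D where "countable D" and D: "\<And>x e. e > 0 \<Longrightarrow> \<exists>d\<in>D. hnorm ip (x - d) < e"
    using assms(1) unfolding h_separable_def by blast
  define near where "near d k = (SOME y. y \<in> Y \<and>
      ((\<exists>y'\<in>Y. hnorm ip (y' - d) < 1 / real (Suc k)) \<longrightarrow> hnorm ip (y - d) < 1 / real (Suc k)))"
    for d k
  have near: "near d k \<in> Y \<and>
      ((\<exists>y'\<in>Y. hnorm ip (y' - d) < 1 / real (Suc k)) \<longrightarrow> hnorm ip (near d k - d) < 1 / real (Suc k))"
    for d k
    unfolding near_def by (rule someI_ex) (use assms(2) in blast)
  define C where "C = (\<lambda>(d, k). near d k) ` (D \<times> UNIV)"
  obtain d0 where "d0 \<in> D" using D[where x = 0 and e = 1] by auto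
  have C: "countable C" "C \<noteq> {}" "C \<subseteq> Y"
    unfolding C_def using \<open>countable D\<close> \<open>d0 \<in> D\<close> conjunct1[OF near] by (simp, blast, force)
  have "\<exists>n. hnorm ip (y - from_nat_into C n) < e" if "y \<in> Y" and "e > 0" for y e
  proof -
    obtain k where k: "1 / real (Suc k) < e / 2" using nat_approx_posE[of "e / 2"] \<open>e > 0\<close> by auto
    obtain d where "d \<in> D" and d: "hnorm ip (y - d) < 1 / real (Suc k)"
      using D[of "1 / real (Suc k)"] by auto
    have "hnorm ip (near d k - d) < 1 / real (Suc k)" using near[of d k] d \<open>y \<in> Y\<close> by blast
    moreover have "hnorm ip (y - near d k) \<le> hnorm ip (y - d) + hnorm ip (near d k - d)"
      using hnorm_triangle[of "y - d" "d - near d k"] hnorm_minus_commute[of d "near d k"] by simp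
    ultimately have "hnorm ip (y - near d k) < e" using d k by linarith
    moreover have "near d k \<in> C" unfolding C_def using \<open>d \<in> D\<close> by force
    then have "near d k \<in> range (from_nat_into C)" using C(1,2) by simp
    ultimately show ?thesis by (metis rangeE)
  qed
  moreover have "from_nat_into C n \<in> Y" for n using from_nat_into[OF C(2)] C(3) by blast
  ultimately show ?thesis by blast
qed

lemma exists_total_orthogonal_seq:
  assumes "h_separable ip" and "vs.subspace Y"
  shows "\<exists>g :: nat \<Rightarrow> 'a. (\<forall>n. g n \<in> Y) \<and> (\<forall>m n. m \<noteq> n \<longrightarrow> ip (g m) (g n) = 0) \<and>
    (\<forall>y\<in>Y. (\<forall>n. ip (g n) y = 0) \<longrightarrow> y = 0)"
proof -
  have "Y \<noteq> {}" using vs.subspace_0[OF assms(2)] by blast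
  from exists_dense_seq[OF assms(1) this] obtain c :: "nat \<Rightarrow> 'a" where c: "\<forall>n. c n \<in> Y"
    and dense: "\<forall>y\<in>Y. \<forall>e>0. \<exists>n. hnorm ip (y - c n) < e"
    by blast
  have "y = 0" if "y \<in> Y" and "\<forall>n. ip (gram_schmidt c n) y = 0" for y
  proof (rule orthogonal_to_approximating_seq_eq_0)
    show "ip (c n) y = 0" for n
      using that(2) by (simp add: orthogonal_to_gram_schmidt)
    show "\<exists>n. hnorm ip (y - c n) < e" if "e > 0" for e
      using dense \<open>y \<in> Y\<close> that by blast
  qed
  moreover have "gram_schmidt c n \<in> Y" for n
    using c by (simp add: gram_schmidt_in[OF assms(2)])
  moreover have "ip (gram_schmidt c m) (gram_schmidt c n) = 0" if "m \<noteq> n" for m n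
    using c that by (simp add: gram_schmidt_orth[OF assms(2)])
  ultimately show ?thesis by blast
qed

end

locale transversal_construction = complex_inner_product +
  fixes X :: "'a set"
    and u g :: "nat \<Rightarrow> 'a"
  assumes u_in: "u n \<in> X"
    and orthonormal_u: "orthonormal_seq u"
    and g_in: "g n \<in> orth_compl ip X"
    and g_orth: "m \<noteq> n \<Longrightarrow> ip (g m) (g n) = 0"
    and g_total: "y \<in> orth_compl ip X \<Longrightarrow> (\<And>n. ip (g n) y = 0) \<Longrightarrow> y = 0"
begin

lemma ip_u_u: "ip (u m) (u n) = (if m = n then 1 else 0)"
  using orthonormal_u unfolding orthonormal_seq_def by blast

text \<open>The \<open>e\<^sub>n\<close> of the proof idea: an isometric copy of g inside X, built from the even-indexed
  u only; the odd-indexed ones are kept free to witness the infinite dimension and codimension of the transversal.\<close>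

definition copy :: "nat \<Rightarrow> 'a" where
  "copy n = sm (complex_of_real (hnorm ip (g n))) (u (2 * n))"

lemma ip_copy_orth_compl: "y \<in> orth_compl ip X \<Longrightarrow> ip (copy n) y = 0"
  using ip_in_orth_compl[OF u_in] unfolding copy_def by (simp add: ip_scale_left)

lemma ip_copy_copy: "ip (copy m) (copy n) = ip (g m) (g n)"
proof (cases "m = n")
  case True
  then show ?thesis
    unfolding copy_def
    by (simp add: ip_scale_left ip_scale_right ip_u_u ip_self_eq_hnorm_square[of "g n"] power2_eq_square)
next
  case False
  then show ?thesis unfolding copy_def by (simp add: ip_scale_left ip_scale_right ip_u_u g_orth)
qed

lemma ip_copy_u_odd: "ip (copy n) (u (2 * k + 1)) = 0"
proof -
  have "2 * n \<noteq> 2 * k + 1" by presburger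
  then show ?thesis unfolding copy_def by (simp add: ip_scale_left ip_u_u)
qed

definition transversal :: "'a set" where
  "transversal = orth_compl ip (range (\<lambda>n. copy n - g n) \<union> range (\<lambda>k. u (4 * k + 1)))"

lemma in_transversal_iff:
  "q \<in> transversal \<longleftrightarrow> (\<forall>n. ip (copy n - g n) q = 0) \<and> (\<forall>k. ip (u (4 * k + 1)) q = 0)"
  unfolding transversal_def orth_compl_def by blast

text \<open>The key identity: \<open>copy m - g m \<bottom> copy n + g n\<close>, because copy and g have
  the same Gram matrix and are orthogonal to each other.\<close>

lemma copy_add_in_transversal: "copy n + g n \<in> transversal"
  unfolding in_transversal_iff
proof (intro conjI allI)
  fix m
  have "ip (g m) (copy n) = 0"
    using ip_copy_orth_compl[OF g_in] ip_eq_0_commute by blast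
  then show "ip (copy m - g m) (copy n + g n) = 0"
    by (simp add: ip_diff_left ip_add_right ip_copy_copy ip_copy_orth_compl[OF g_in])
next
  fix k
  have "ip (u (4 * k + 1)) (copy n) = 0"
    using ip_copy_u_odd[of n "2 * k"] ip_eq_0_commute by (simp add: mult.assoc)
  then show "ip (u (4 * k + 1)) (copy n + g n) = 0"
    by (simp add: ip_add_right ip_in_orth_compl[OF u_in g_in])
qed

lemma u_4k3_in_transversal: "u (4 * k + 3) \<in> transversal"
  unfolding in_transversal_iff
proof (intro conjI allI)
  fix n
  have "4 * k + 3 = 2 * (2 * k + 1) + 1" by simp
  then have "ip (copy n) (u (4 * k + 3)) = 0" by (simp only: ip_copy_u_odd)
  moreover have "ip (g n) (u (4 * k + 3)) = 0"
    using ip_in_orth_compl[OF u_in g_in] ip_eq_0_commute by blast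
  ultimately show "ip (copy n - g n) (u (4 * k + 3)) = 0" by (simp add: ip_diff_left)
next
  fix j
  show "ip (u (4 * j + 1)) (u (4 * k + 3)) = 0" by (simp add: ip_u_u) presburger
qed

lemma transversal_orthogonal_u_4k1: "q \<in> transversal \<Longrightarrow> ip q (u (4 * k + 1)) = 0"
  using ip_eq_0_commute unfolding in_transversal_iff by blast

lemma transversal_inter_orth_compl: "transversal \<inter> orth_compl ip X = {0}"
proof -
  have "y = 0" if "y \<in> transversal" and "y \<in> orth_compl ip X" for y
  proof (rule g_total[OF that(2)])
    fix n
    have "ip (copy n - g n) y = 0" using that(1) unfolding in_transversal_iff by blast
    then show "ip (g n) y = 0" by (simp add: ip_diff_left ip_copy_orth_compl[OF that(2)])
  qed
  moreover have "0 \<in> transversal" "0 \<in> orth_compl ip X"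
    unfolding transversal_def orth_compl_def by simp_all
  ultimately show ?thesis by blast
qed

lemma orth_compl_transversal_inter_orth_compl: "orth_compl ip transversal \<inter> orth_compl ip X = {0}"
proof -
  have "z = 0" if "z \<in> orth_compl ip transversal" and "z \<in> orth_compl ip X" for z
  proof (rule g_total[OF that(2)])
    fix n
    have "ip (copy n + g n) z = 0"
      using that(1) copy_add_in_transversal unfolding orth_compl_def by blast
    then show "ip (g n) z = 0" by (simp add: ip_add_left ip_copy_orth_compl[OF that(2)])
  qed
  moreover have "0 \<in> orth_compl ip transversal" "0 \<in> orth_compl ip X"
    unfolding orth_compl_def by simp_all
  ultimately show ?thesis by blast
qed

lemma closed_subspace_transversal: "closed_subspace sm ip transversal"
  unfolding transversal_def by (rule closed_subspace_orth_compl)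

lemma infinite_dim_transversal: "infinite_dim sm transversal"
proof (rule infinite_dim_if_orthonormal_seq)
  show "orthonormal_seq (u \<circ> (\<lambda>k. 4 * k + 3))"
    using orthonormal_u by (rule orthonormal_seq_comp) (simp add: inj_def)
qed (simp add: u_4k3_in_transversal)

lemma infinite_codim_transversal: "infinite_codim sm transversal"
proof (rule infinite_codim_if_orthogonal_to_orthonormal_seq)
  show "orthonormal_seq (u \<circ> (\<lambda>k. 4 * k + 1))"
    using orthonormal_u by (rule orthonormal_seq_comp) (simp add: inj_def)
  show "ip q ((u \<circ> (\<lambda>k. 4 * k + 1)) k) = 0" if "q \<in> transversal" for q k
    unfolding comp_apply using that by (rule transversal_orthogonal_u_4k1)
qed

end

theorem lemma4:
  fixes sm :: "complex \<Rightarrow> 'a::ab_group_add \<Rightarrow> 'a"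
    and ip :: "'a \<Rightarrow> 'a \<Rightarrow> complex"
    and X :: "'a set"
  assumes "complex_hilbert_space sm ip"
    and "h_separable ip"
    and "infinite_dim sm (UNIV :: 'a set)"
    and "closed_subspace sm ip X"
    and "infinite_dim sm X"
    and "infinite_codim sm X"
  shows "\<exists>Q. closed_subspace sm ip Q \<and> infinite_dim sm Q \<and> infinite_codim sm Q \<and>
             Q \<inter> orth_compl ip X = {0} \<and>
             orth_compl ip Q \<inter> orth_compl ip X = {0}"
proof -
  interpret complex_inner_product sm ip
    using assms(1) unfolding complex_hilbert_space_def by unfold_locales blast
  have "vs.subspace X"
    using assms(4) unfolding closed_subspace_def h_subspace_eq_subspace by blast
  from exists_orthonormal_seq[OF this assms(5)] obtain u
    where "\<forall>n. u n \<in> X" and "orthonormal_seq u" by blast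
  moreover from exists_total_orthogonal_seq[OF assms(2) subspace_orth_compl] obtain g :: "nat \<Rightarrow> 'a"
    where "\<forall>n. g n \<in> orth_compl ip X" and "\<forall>m n. m \<noteq> n \<longrightarrow> ip (g m) (g n) = 0"
      and "\<forall>y\<in>orth_compl ip X. (\<forall>n. ip (g n) y = 0) \<longrightarrow> y = 0"
    by blast
  ultimately interpret transversal_construction sm ip X u g
    by unfold_locales auto
  show ?thesis
    using closed_subspace_transversal infinite_dim_transversal infinite_codim_transversal
      transversal_inter_orth_compl orth_compl_transversal_inter_orth_compl by blast
qed

end
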